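(* In the self-training loop with finite $\Gamma\in(0,\infty)$, the variance of the outputs either stays bounded away from zero, $\inf_{t\ge0}\mathrm{Var}(\theta^\star_t)>0$, or oscillates, $\limsup_{t\to\infty}\mathrm{Var}(\theta^\star_t)>\liminf_{t\to\infty}\mathrm{Var}(\theta^\star_t)$.
   Context: Self-training loop. Fix $\mu_T\in\mathbb R$, $\sigma_T>0$, $\gamma>0$, $\Gamma\in(0,\infty]$; population preferences $\theta\sim N(\mu_T,\sigma_T^2)$ with density $\pi_T$; $\phi$ denotes the standard normal density. Set $\pi_0=\pi_T$. For $t=0,1,2,\dots$, given the AI prior $\pi_t$ (a probability distribution on $\mathbb R$): a user of type $\theta$ chooses $\sigma\in[0,\infty]$, the AI observes $s=\theta+\varepsilon$, $\varepsilon\sim N(0,\sigma^2)$, and outputs the posterior mean $\theta_{A,t}(s,\sigma)=\frac{\int x\,\phi((s-x)/\sigma)\,\pi_t(dx)}{\int \phi((s-x)/\sigma)\,\pi_t(dx)}$ for $\sigma\in(0,\infty)$ (and the mean of $\pi_t$ if $\sigma=\infty$). Fidelity error $E_t(\theta,\sigma)=\mathbb E_{s\sim N(\theta,\sigma^2)}[(\theta_{A,t}(s,\sigma)-\theta)^2]$; communication cost $I(\sigma)=-\tfrac12\ln\frac{\sigma^2}{\sigma_T^2+\sigma^2}$ (same at every $t$, $I(\infty)=0$, $I(0)=\infty$); loss $L_t(\theta,\sigma)=E_t(\theta,\sigma)+\gamma I(\sigma)$; $\sigma^\star_t(\theta)\in\arg\min_{\sigma}L_t(\theta,\sigma)$.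 Output: $\theta^\star_t=\theta_{A,t}(s,\sigma^\star_t(\theta))$ with $s\sim N(\theta,\sigma^\star_t(\theta)^2)$ if $L_t(\theta,\sigma^\star_t(\theta))\le\Gamma$, else $\theta^\star_t=\theta$. The next prior $\pi_{t+1}$ is the law of $\theta^\star_t$ when $\theta\sim\pi_T$. $\mathrm{Var}(\theta^\star_t)$ denotes the variance of this law. *)

theory Defs
  imports "HOL-Probability.Probability"
begin

definition normal_meas :: "real \<Rightarrow> real \<Rightarrow> real measure" where
  "normal_meas m s = density lborel (normal_density m s)"

definition mean_of :: "real measure \<Rightarrow> real" where
  "mean_of P = (\<integral>x. x \<partial>P)"

definition Var_of :: "real measure \<Rightarrow> ennreal" where
  "Var_of P = (\<integral>\<^sup>+x. ennreal ((x - mean_of P)\<^sup>2) \<partial>P)"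

text \<open>For sigma = \<infinity> it is the prior mean; for sigma = 0 the signal is
  exact and the output is s (this case is never selected, since I(0) = \<infinity>).\<close>
definition post_mean :: "real measure \<Rightarrow> real \<Rightarrow> ereal \<Rightarrow> real" where
  "post_mean P s \<sigma> =
     (if \<sigma> = \<infinity> then mean_of P
      else if \<sigma> = 0 then s
      else (\<integral>x. x * std_normal_density ((s - x) / real_of_ereal \<sigma>) \<partial>P)
         / (\<integral>x. std_normal_density ((s - x) / real_of_ereal \<sigma>) \<partial>P))"

definition fid_err :: "real measure \<Rightarrow> real \<Rightarrow> ereal \<Rightarrow> ennreal" where
  "fid_err P \<theta> \<sigma> =
     (if \<sigma> = \<infinity> then ennreal ((mean_of P - \<theta>)\<^sup>2)
      else if \<sigma> = 0 then 0
      else (\<integral>\<^sup>+s. ennreal ((post_mean P s \<sigma> - \<theta>)\<^sup>2) \<partial>normal_meas \<theta> (real_of_ereal \<sigma>)))"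

definition comm_cost :: "real \<Rightarrow> ereal \<Rightarrow> ennreal" where
  "comm_cost \<sigma>T \<sigma> =
     (if \<sigma> = 0 then \<infinity>
      else if \<sigma> = \<infinity> then 0
      else ennreal (- (1/2) * ln ((real_of_ereal \<sigma>)\<^sup>2 / (\<sigma>T\<^sup>2 + (real_of_ereal \<sigma>)\<^sup>2))))"

definition loss :: "real measure \<Rightarrow> real \<Rightarrow> real \<Rightarrow> real \<Rightarrow> ereal \<Rightarrow> ennreal" where
  "loss P \<sigma>T \<gamma> \<theta> \<sigma> = fid_err P \<theta> \<sigma> + ennreal \<gamma> * comm_cost \<sigma>T \<sigma>"

definition is_opt_sigma :: "real measure \<Rightarrow> real \<Rightarrow> real \<Rightarrow> real \<Rightarrow> ereal \<Rightarrow> bool" where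
  "is_opt_sigma P \<sigma>T \<gamma> \<theta> \<sigma> \<longleftrightarrow>
     0 \<le> \<sigma> \<and> (\<forall>\<sigma>'. 0 \<le> \<sigma>' \<longrightarrow> loss P \<sigma>T \<gamma> \<theta> \<sigma> \<le> loss P \<sigma>T \<gamma> \<theta> \<sigma>')"

definition obs_output :: "real measure \<Rightarrow> real \<Rightarrow> ereal \<Rightarrow> real measure" where
  "obs_output P \<theta> \<sigma> =
     (if \<sigma> = \<infinity> then return borel (mean_of P)
      else if \<sigma> = 0 then return borel \<theta>
      else distr (normal_meas \<theta> (real_of_ereal \<sigma>)) borel (\<lambda>s. post_mean P s \<sigma>))"

text \<open>Conditional law of theta*_t given the user type theta, for prior P and chosen sigma.\<close>
definition out_kernel :: "real measure \<Rightarrow> real \<Rightarrow> real \<Rightarrow> real \<Rightarrow> ereal \<Rightarrow> real \<Rightarrow> real measure" where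
  "out_kernel P \<sigma>T \<gamma> \<Gamma> \<sigma> \<theta> =
     (if loss P \<sigma>T \<gamma> \<theta> \<sigma> \<le> ennreal \<Gamma> then obs_output P \<theta> \<sigma> else return borel \<theta>)"

end

theory Submission imports Defs begin

text \<open>Every user either gets their own type back or an output with mean squared error at
  most the loss, hence at most \<open>\<Gamma>\<close>. A law whose points all stay within \<open>\<Gamma>\<close> (in mean square) of a
  user's type cannot bring the users with \<open>|\<theta> - m| \<ge> 2\<surd>\<Gamma>\<close> closer than \<open>\<Gamma>\<close> (in mean square) to
  any point \<open>m\<close>; since the Gaussian population gives those users positive mass, every
  \<open>Var(\<theta>\<^sup>\<star>\<^sub>t)\<close> is at least \<open>\<Gamma>\<close> times that mass, uniformly in \<open>t\<close>. So the first alternative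
  always holds.\<close>

lemma sets_normal_meas [simp]: "sets (normal_meas \<mu> \<sigma>) = sets borel"
  by (simp add: normal_meas_def)

lemma normal_meas_in_prob_algebra:
  assumes "\<sigma> > 0"
  shows "normal_meas \<mu> \<sigma> \<in> space (prob_algebra borel)"
  using prob_space_normal_density[OF assms]
  by (simp add: space_prob_algebra normal_meas_def)

lemma borel_measurable_post_mean:
  assumes "sigma_finite_measure Q" and Q: "sets Q = sets borel" and "\<sigma> \<noteq> \<infinity>" "\<sigma> \<noteq> 0"
  shows "(\<lambda>s. post_mean Q s \<sigma>) \<in> borel_measurable borel"
proof -
  interpret sigma_finite_measure Q by fact
  have S: "sets (borel \<Otimes>\<^sub>M Q) = sets (borel \<Otimes>\<^sub>M (borel::real measure))"
    by (rule sets_pair_measure_cong) (auto simp: Q)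
  have "(\<lambda>s. \<integral>x. x * std_normal_density ((s - x) / real_of_ereal \<sigma>) \<partial>Q) \<in> borel_measurable borel"
    by (rule borel_measurable_lebesgue_integral, subst measurable_cong_sets[OF S refl]) measurable
  moreover have "(\<lambda>s. \<integral>x. std_normal_density ((s - x) / real_of_ereal \<sigma>) \<partial>Q) \<in> borel_measurable borel"
    by (rule borel_measurable_lebesgue_integral, subst measurable_cong_sets[OF S refl]) measurable
  ultimately show ?thesis
    using assms by (simp add: post_mean_def)
qed

lemma nn_integral_sq_dist_obs_output:
  assumes "sigma_finite_measure Q" and "sets Q = sets borel"
  shows "(\<integral>\<^sup>+x. ennreal ((x - \<theta>)\<^sup>2) \<partial>obs_output Q \<theta> \<sigma>) = fid_err Q \<theta> \<sigma>"
proof (cases "\<sigma> = \<infinity> \<or> \<sigma> = 0")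
  case True
  then show ?thesis
    by (auto simp: obs_output_def fid_err_def nn_integral_return)
next
  case False
  then have "(\<lambda>s. post_mean Q s \<sigma>) \<in> normal_meas \<theta> (real_of_ereal \<sigma>) \<rightarrow>\<^sub>M borel"
    using borel_measurable_post_mean[OF assms] by (simp cong: measurable_cong_sets)
  with False show ?thesis
    by (simp add: obs_output_def fid_err_def nn_integral_distr)
qed

lemma nn_integral_sq_dist_out_kernel_le:
  assumes "sigma_finite_measure Q" and "sets Q = sets borel"
  shows "(\<integral>\<^sup>+x. ennreal ((x - \<theta>)\<^sup>2) \<partial>out_kernel Q \<sigma>T \<gamma> \<Gamma> \<sigma> \<theta>) \<le> ennreal \<Gamma>"
proof (cases "loss Q \<sigma>T \<gamma> \<theta> \<sigma> \<le> ennreal \<Gamma>")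
  case True
  have "fid_err Q \<theta> \<sigma> \<le> loss Q \<sigma>T \<gamma> \<theta> \<sigma>"
    by (simp add: loss_def)
  with True show ?thesis
    by (simp add: out_kernel_def nn_integral_sq_dist_obs_output[OF assms])
qed (simp add: out_kernel_def nn_integral_return)

text \<open>The parallelogram law \<open>(\<theta> - m)\<^sup>2 \<le> 2(x - m)\<^sup>2 + 2(x - \<theta>)\<^sup>2\<close>, integrated.\<close>
lemma nn_integral_sq_dist_triangle:
  assumes K: "K \<in> space (prob_algebra borel)"
  shows "ennreal ((\<theta> - m)\<^sup>2 / 2)
           \<le> (\<integral>\<^sup>+x. ennreal ((x - m)\<^sup>2) \<partial>K) + (\<integral>\<^sup>+x. ennreal ((x - \<theta>)\<^sup>2) \<partial>K)"
proof -
  have prob: "prob_space K" and sets_K: "sets K = sets borel"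
    using K by (auto simp: space_prob_algebra)
  have pointwise: "(\<theta> - m)\<^sup>2 / 2 \<le> (x - m)\<^sup>2 + (x - \<theta>)\<^sup>2" for x :: real
  proof -
    have "(\<theta> - m)\<^sup>2 = 2 * (x - m)\<^sup>2 + 2 * (x - \<theta>)\<^sup>2 - ((x - m) + (x - \<theta>))\<^sup>2"
      by (simp add: power2_eq_square algebra_simps)
    moreover have "0 \<le> ((x - m) + (x - \<theta>))\<^sup>2"
      by simp
    ultimately show ?thesis
      by linarith
  qed
  have "ennreal ((\<theta> - m)\<^sup>2 / 2) = (\<integral>\<^sup>+x. ennreal ((\<theta> - m)\<^sup>2 / 2) \<partial>K)"
    using prob_space.emeasure_space_1[OF prob] by simp
  also have "\<dots> \<le> (\<integral>\<^sup>+x. ennreal ((x - m)\<^sup>2) + ennreal ((x - \<theta>)\<^sup>2) \<partial>K)"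
    using pointwise by (intro nn_integral_mono) (simp add: ennreal_plus[symmetric] del: ennreal_plus)
  also have "\<dots> = (\<integral>\<^sup>+x. ennreal ((x - m)\<^sup>2) \<partial>K) + (\<integral>\<^sup>+x. ennreal ((x - \<theta>)\<^sup>2) \<partial>K)"
    by (rule nn_integral_add) (simp_all cong: measurable_cong_sets add: sets_K)
  finally show ?thesis .
qed

lemma nn_integral_sq_dist_ge_if_far:
  assumes K: "K \<in> space (prob_algebra borel)"
    and close: "(\<integral>\<^sup>+x. ennreal ((x - \<theta>)\<^sup>2) \<partial>K) \<le> ennreal \<Gamma>"
    and "0 \<le> \<Gamma>" and far: "4 * \<Gamma> \<le> (\<theta> - m)\<^sup>2"
  shows "ennreal \<Gamma> \<le> (\<integral>\<^sup>+x. ennreal ((x - m)\<^sup>2) \<partial>K)"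
proof -
  have "ennreal \<Gamma> + ennreal \<Gamma> = ennreal (2 * \<Gamma>)"
    using \<open>0 \<le> \<Gamma>\<close> by (simp add: ennreal_plus[symmetric] del: ennreal_plus)
  also have "\<dots> \<le> ennreal ((\<theta> - m)\<^sup>2 / 2)"
    using far by (intro ennreal_leI) simp
  also have "\<dots> \<le> (\<integral>\<^sup>+x. ennreal ((x - m)\<^sup>2) \<partial>K) + ennreal \<Gamma>"
    using nn_integral_sq_dist_triangle[OF K] close by (meson add_left_mono order_trans)
  finally show ?thesis
    by simp
qed

lemma emeasure_normal_meas_far_ge:
  assumes "\<sigma> > 0" and "a \<ge> 0"
  shows "ennreal (normal_density \<mu> \<sigma> (\<mu> + a + 1)) \<le> emeasure (normal_meas \<mu> \<sigma>) {x. a \<le> \<bar>x - m\<bar>}"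
proof -
  \<comment> \<open>a unit interval at distance \<open>a\<close> from \<open>\<mu>\<close>, on the side away from \<open>m\<close>\<close>
  define I where "I = (if m \<le> \<mu> then {\<mu>+a..\<mu>+a+1} else {\<mu>-a-1..\<mu>-a})"
  define d where "d = normal_density \<mu> \<sigma> (\<mu> + a + 1)"
  have density_ge: "d \<le> normal_density \<mu> \<sigma> x" if "x \<in> I" for x
  proof -
    have "(x - \<mu>)\<^sup>2 \<le> (a + 1)\<^sup>2"
      using that \<open>a \<ge> 0\<close> by (auto simp: I_def abs_le_square_iff[symmetric] split: if_splits)
    then have "-(a + 1)\<^sup>2 / (2 * \<sigma>\<^sup>2) \<le> -(x - \<mu>)\<^sup>2 / (2 * \<sigma>\<^sup>2)"
      using \<open>\<sigma> > 0\<close> by (intro divide_right_mono) auto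
    then show ?thesis
      unfolding d_def normal_density_def by (intro mult_left_mono) auto
  qed
  have "ennreal d = (\<integral>\<^sup>+x. ennreal d * indicator I x \<partial>lborel)"
    by (simp add: I_def nn_integral_cmult_indicator)
  also have "\<dots> \<le> (\<integral>\<^sup>+x. ennreal (normal_density \<mu> \<sigma> x) * indicator I x \<partial>lborel)"
    by (intro nn_integral_mono) (auto split: split_indicator intro: ennreal_leI density_ge)
  also have "\<dots> = emeasure (normal_meas \<mu> \<sigma>) I"
    by (simp add: normal_meas_def I_def emeasure_density)
  also have "\<dots> \<le> emeasure (normal_meas \<mu> \<sigma>) {x. a \<le> \<bar>x - m\<bar>}"
    by (rule emeasure_mono) (auto simp: I_def)
  finally show ?thesis
    unfolding d_def .
qed

theorem nn_integral_sq_dist_normal_bind_ge: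
  assumes "\<sigma> > 0" and "\<Gamma> \<ge> 0"
    and K: "K \<in> borel \<rightarrow>\<^sub>M prob_algebra borel"
    and close: "\<And>\<theta>. (\<integral>\<^sup>+x. ennreal ((x - \<theta>)\<^sup>2) \<partial>K \<theta>) \<le> ennreal \<Gamma>"
  shows "ennreal (\<Gamma> * normal_density \<mu> \<sigma> (\<mu> + 2 * sqrt \<Gamma> + 1))
           \<le> (\<integral>\<^sup>+x. ennreal ((x - m)\<^sup>2) \<partial>(normal_meas \<mu> \<sigma> \<bind> K))"
proof -
  define N where "N = normal_meas \<mu> \<sigma>"
  define far where "far = {\<theta>. 2 * sqrt \<Gamma> \<le> \<bar>\<theta> - m\<bar>}"
  have K_N: "K \<in> N \<rightarrow>\<^sub>M prob_algebra borel"
    using K by (simp add: N_def cong: measurable_cong_sets)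
  have "ennreal \<Gamma> * indicator far \<theta> \<le> (\<integral>\<^sup>+x. ennreal ((x - m)\<^sup>2) \<partial>K \<theta>)" for \<theta>
  proof (cases "\<theta> \<in> far")
    case True
    then have "\<bar>2 * sqrt \<Gamma>\<bar> \<le> \<bar>\<theta> - m\<bar>"
      using \<open>\<Gamma> \<ge> 0\<close> by (simp add: far_def)
    then have "(2 * sqrt \<Gamma>)\<^sup>2 \<le> (\<theta> - m)\<^sup>2"
      by (simp only: abs_le_square_iff)
    then have "4 * \<Gamma> \<le> (\<theta> - m)\<^sup>2"
      using \<open>\<Gamma> \<ge> 0\<close> by (simp add: power_mult_distrib)
    with True show ?thesis
      using nn_integral_sq_dist_ge_if_far[OF measurable_space[OF K] close \<open>\<Gamma> \<ge> 0\<close>] by simp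
  qed simp
  then have "(\<integral>\<^sup>+\<theta>. ennreal \<Gamma> * indicator far \<theta> \<partial>N)
               \<le> (\<integral>\<^sup>+\<theta>. (\<integral>\<^sup>+x. ennreal ((x - m)\<^sup>2) \<partial>K \<theta>) \<partial>N)"
    by (intro nn_integral_mono)
  also have "\<dots> = (\<integral>\<^sup>+x. ennreal ((x - m)\<^sup>2) \<partial>(N \<bind> K))"
    by (rule nn_integral_bind[symmetric, OF _ measurable_prob_algebraD[OF K_N]]) simp
  finally have "ennreal \<Gamma> * emeasure N far \<le> (\<integral>\<^sup>+x. ennreal ((x - m)\<^sup>2) \<partial>(N \<bind> K))"
    by (simp add: far_def N_def nn_integral_cmult_indicator)
  moreover have "ennreal \<Gamma> * ennreal (normal_density \<mu> \<sigma> (\<mu> + 2 * sqrt \<Gamma> + 1)) \<le> ennreal \<Gamma> * emeasure N far"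
    unfolding N_def far_def using assms by (intro mult_left_mono emeasure_normal_meas_far_ge) auto
  ultimately show ?thesis
    using \<open>\<Gamma> \<ge> 0\<close> unfolding N_def by (simp add: ennreal_mult)
qed

theorem theorem2:
  fixes \<mu>T \<sigma>T \<gamma> \<Gamma> :: real
    and P :: "nat \<Rightarrow> real measure"
    and sel :: "nat \<Rightarrow> real \<Rightarrow> ereal"
  assumes "\<sigma>T > 0" and "\<gamma> > 0" and "\<Gamma> > 0"
    and "P 0 = normal_meas \<mu>T \<sigma>T"
    and "\<And>t \<theta>. is_opt_sigma (P t) \<sigma>T \<gamma> \<theta> (sel t \<theta>)"
    and "\<And>t. (\<lambda>\<theta>. out_kernel (P t) \<sigma>T \<gamma> \<Gamma> (sel t \<theta>) \<theta>) \<in> borel \<rightarrow>\<^sub>M prob_algebra borel"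
    and "\<And>t. P (Suc t) = normal_meas \<mu>T \<sigma>T \<bind> (\<lambda>\<theta>. out_kernel (P t) \<sigma>T \<gamma> \<Gamma> (sel t \<theta>) \<theta>)"
  shows "(INF t. Var_of (P (Suc t))) > 0
         \<or> limsup (\<lambda>t. Var_of (P (Suc t))) > liminf (\<lambda>t. Var_of (P (Suc t)))"
proof -
  note \<sigma>T = assms(1) and \<Gamma> = assms(3) and kernel = assms(6) and step = assms(7)
  define v where "v = \<Gamma> * normal_density \<mu>T \<sigma>T (\<mu>T + 2 * sqrt \<Gamma> + 1)"
  note N = normal_meas_in_prob_algebra[OF \<sigma>T]
  have P_borel: "sigma_finite_measure (P t)" "sets (P t) = sets borel" for t
    using N prob_space_bind'[OF N kernel] sets_bind'[OF N kernel]
    by (cases t; simp add: assms(4) step space_prob_algebra prob_space_imp_sigma_finite)+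
  have "ennreal v \<le> Var_of (P (Suc t))" for t
    unfolding Var_of_def v_def step
    using \<sigma>T \<Gamma> kernel nn_integral_sq_dist_out_kernel_le[OF P_borel]
    by (intro nn_integral_sq_dist_normal_bind_ge) auto
  then have "ennreal v \<le> (INF t. Var_of (P (Suc t)))"
    by (rule INF_greatest)
  moreover have "0 < ennreal v"
    using \<sigma>T \<Gamma> by (simp add: v_def normal_density_def)
  ultimately show ?thesis
    by (metis ennreal_less_zero_iff order_less_le_trans)
qed

end
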